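(* Let $\Omega\subset\mathbb{R}^d$ be open, $k\in\mathbb{N}\cup\{\infty\}$, $E$ a non-trivial locally convex Hausdorff space over $\mathbb{K}$, $\mathcal{FV}(\Omega)$ a dom-space such that the inclusion $I\colon\mathcal{FV}(\Omega)\to\mathcal{CW}^k(\Omega)$, $f\mapsto f$, is (well-defined and) continuous. If $\mathcal{FV}(\Omega)$ is barrelled, then for all $u\in\mathcal{FV}(\Omega)\varepsilon E$ we have $S(u)\in\mathcal{C}^k(\Omega,E)$ and $(\partial^\beta)^E S(u)(x)=u(\delta_x\circ(\partial^\beta)^{\mathbb{K}})$ for all $\beta\in\mathbb{N}_0^d$ with $|\beta|\le k$ and all $x\in\Omega$.
   Context: $\mathbb{K}\in\{\mathbb{R},\mathbb{C}\}$. For $f\colon\Omega\to E$, $(\partial^{e_n})^E f(x):=\lim_{h\to0}\frac{f(x+he_n)-f(x)}{h}$ in $E$; $f$ is $\mathcal{C}^1$ if these exist and are continuous; $f$ is $\mathcal{C}^k$ if it is $\mathcal{C}^1$ with all first partial derivatives $\mathcal{C}^{k-1}$ ($\mathcal{C}^0$ = continuous), $\mathcal{C}^\infty$ if $\mathcal{C}^k$ for all $k$; $(\partial^\beta)^E:=(\partial^{e_1})^{\beta_1}\cdots(\partial^{e_d})^{\beta_d}$, $|\beta|=\sum\beta_i$. $\mathcal{CW}^k(\Omega)$ is $\mathcal{C}^k(\Omega,\mathbb{K})$ with the topology of uniform convergence of all partial derivatives of order $\le k$ on compact subsets of $\Omega$. Framework: $J,M$ non-empty index sets, $(\omega_m)_{m\in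 M}$ non-empty sets, $\nu_{j,m}\colon\omega_m\to[0,\infty)$ such that for all $m$, $x\in\omega_m$ some $\nu_{j,m}(x)>0$; $\operatorname{AP}(\Omega)\subset\mathbb{K}^\Omega$ a linear subspace; $T_m\colon\operatorname{dom}T_m\to\mathbb{K}^{\omega_m}$ linear maps on linear subspaces of $\mathbb{K}^\Omega$; $\mathcal{FV}(\Omega):=\{f\in\operatorname{AP}(\Omega)\cap\bigcap_m\operatorname{dom}T_m: |f|_{j,m}:=\sup_{x\in\omega_m}|T_m(f)(x)|\nu_{j,m}(x)<\infty\ \forall j,m\}$ with these seminorms. It is a dom-space if it is Hausdorff, the seminorms are directed and every $\delta_x\colon f\mapsto f(x)$ belongs to $\mathcal{FV}(\Omega)'$. $\mathcal{FV}(\Omega)\varepsilon E$: continuous linear maps from $\mathcal{FV}(\Omega)'$ (topology of uniform convergence on absolutely convex compact sets) to $E$, with the topology of uniform convergence on equicontinuous sets; $S(u)(x):=u(\delta_x)$. $\delta_x\circ(\partial^\beta)^{\mathbb{K}}$ denotes $f\mapsto(\partial^\beta)^{\mathbb{K}}f(x)$ on $\mathcal{FV}(\Omega)$. *)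

theory Defs
  imports "HOL-Analysis.Analysis" "HOL-Library.Function_Algebras" "HOL-Library.Extended_Nat"
begin

text \<open>Scalars: a type of class real_normed_field (up to isometric isomorphism exactly
  the real or the complex numbers).  Points of Omega live in real^'n (d = CARD('n)).\<close>

definition ext_on :: "'v set \<Rightarrow> ('v \<Rightarrow> 'k::zero) \<Rightarrow> 'v \<Rightarrow> 'k" where
  "ext_on V \<phi> = (\<lambda>v. if v \<in> V then \<phi> v else 0)"

definition fscale :: "'k::times \<Rightarrow> ('a \<Rightarrow> 'k) \<Rightarrow> 'a \<Rightarrow> 'k" where
  "fscale c f = (\<lambda>x. c * f x)"

definition lin_subspace :: "('a \<Rightarrow> 'k::real_normed_field) set \<Rightarrow> bool" where
  "lin_subspace S \<longleftrightarrow> 0 \<in> S \<and> (\<forall>f\<in>S. \<forall>g\<in>S. f + g \<in> S) \<and> (\<forall>c. \<forall>f\<in>S. fscale c f \<in> S)"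

definition lin_on :: "('k \<Rightarrow> 'v \<Rightarrow> 'v) \<Rightarrow> ('k \<Rightarrow> 'w \<Rightarrow> 'w) \<Rightarrow> 'v::plus set \<Rightarrow> ('v \<Rightarrow> 'w::plus) \<Rightarrow> bool" where
  "lin_on sc1 sc2 V \<phi> \<longleftrightarrow> (\<forall>x\<in>V. \<forall>y\<in>V. \<phi> (x + y) = \<phi> x + \<phi> y) \<and> (\<forall>c. \<forall>x\<in>V. \<phi> (sc1 c x) = sc2 c (\<phi> x))"

definition cont_lin_sn :: "'i set \<Rightarrow> ('i \<Rightarrow> 'v \<Rightarrow> real) \<Rightarrow> ('l \<Rightarrow> 'w \<Rightarrow> real) \<Rightarrow> 'v set \<Rightarrow> ('v \<Rightarrow> 'w) \<Rightarrow> bool" where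
  "cont_lin_sn Idx P Q V \<phi> \<longleftrightarrow>
     (\<forall>l. \<exists>I C. finite I \<and> I \<subseteq> Idx \<and> (\<forall>v\<in>V. Q l (\<phi> v) \<le> C * (\<Sum>i\<in>I. P i v)))"

definition sn_topology :: "'v set \<Rightarrow> ('i \<Rightarrow> 'v::ab_group_add \<Rightarrow> real) \<Rightarrow> 'v topology" where
  "sn_topology V P = topology (\<lambda>U. U \<subseteq> V \<and>
     (\<forall>v\<in>U. \<exists>I \<epsilon>. finite I \<and> \<epsilon> > 0 \<and> {w\<in>V. \<forall>i\<in>I. P i (w - v) < \<epsilon>} \<subseteq> U))"

definition is_seminorm :: "('k::real_normed_field \<Rightarrow> 'e \<Rightarrow> 'e) \<Rightarrow> ('e::ab_group_add \<Rightarrow> real) \<Rightarrow> bool" where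
  "is_seminorm sc p \<longleftrightarrow> (\<forall>x y. p (x + y) \<le> p x + p y) \<and> (\<forall>c x. p (sc c x) = norm c * p x)"

definition lc_hausdorff :: "('k::real_normed_field \<Rightarrow> 'e \<Rightarrow> 'e) \<Rightarrow> ('l \<Rightarrow> 'e::ab_group_add \<Rightarrow> real) \<Rightarrow> bool" where
  "lc_hausdorff sc q \<longleftrightarrow> vector_space sc \<and> (\<forall>l. is_seminorm sc (q l)) \<and> (\<forall>e. (\<forall>l. q l e = 0) \<longrightarrow> e = 0)"

definition directed_sn :: "'v set \<Rightarrow> ('i \<Rightarrow> 'v \<Rightarrow> real) \<Rightarrow> bool" where
  "directed_sn V P \<longleftrightarrow> (\<forall>i1 i2. \<exists>i3 C. \<forall>v\<in>V. max (P i1 v) (P i2 v) \<le> C * P i3 v)"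

text \<open>Topological dual (functionals are represented extensionally: zero outside V).\<close>
definition dual_sp :: "('k::real_normed_field \<Rightarrow> 'v \<Rightarrow> 'v) \<Rightarrow> 'v::ab_group_add set \<Rightarrow> ('i \<Rightarrow> 'v \<Rightarrow> real) \<Rightarrow> ('v \<Rightarrow> 'k) set" where
  "dual_sp sc V P = {\<phi>. (\<forall>v. v \<notin> V \<longrightarrow> \<phi> v = 0) \<and> lin_on sc (*) V \<phi> \<and> cont_lin_sn UNIV P (\<lambda>_::unit. norm) V \<phi>}"

definition abs_convex :: "('k::real_normed_field \<Rightarrow> 'v \<Rightarrow> 'v) \<Rightarrow> 'v::plus set \<Rightarrow> bool" where
  "abs_convex sc K \<longleftrightarrow> (\<forall>x\<in>K. \<forall>y\<in>K. \<forall>a b. norm a + norm b \<le> 1 \<longrightarrow> sc a x + sc b y \<in> K)"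

definition acx_compacts :: "('k::real_normed_field \<Rightarrow> 'v \<Rightarrow> 'v) \<Rightarrow> 'v::ab_group_add set \<Rightarrow> ('i \<Rightarrow> 'v \<Rightarrow> real) \<Rightarrow> 'v set set" where
  "acx_compacts sc V P = {K. K \<noteq> {} \<and> K \<subseteq> V \<and> abs_convex sc K \<and> compactin (sn_topology V P) K}"

definition dual_sn :: "'v set \<Rightarrow> ('v \<Rightarrow> 'k::real_normed_field) \<Rightarrow> real" where
  "dual_sn K \<phi> = (SUP v\<in>K. norm (\<phi> v))"

text \<open>The epsilon-product (as a set): continuous linear maps from the dual
  (with the topology of uniform convergence on absolutely convex compact sets) to E.\<close>
definition eps_prod :: "('k::real_normed_field \<Rightarrow> 'v \<Rightarrow> 'v) \<Rightarrow> 'v::ab_group_add set \<Rightarrow> ('i \<Rightarrow> 'v \<Rightarrow> real)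
     \<Rightarrow> ('k \<Rightarrow> 'e \<Rightarrow> 'e) \<Rightarrow> ('l \<Rightarrow> 'e::ab_group_add \<Rightarrow> real) \<Rightarrow> (('v \<Rightarrow> 'k) \<Rightarrow> 'e) set" where
  "eps_prod sc V P scE qE = {u. lin_on fscale scE (dual_sp sc V P) u \<and>
      cont_lin_sn (acx_compacts sc V P) dual_sn qE (dual_sp sc V P) u}"

definition barrelled :: "('k::real_normed_field \<Rightarrow> 'v \<Rightarrow> 'v) \<Rightarrow> 'v::ab_group_add set \<Rightarrow> ('i \<Rightarrow> 'v \<Rightarrow> real) \<Rightarrow> bool" where
  "barrelled sc V P \<longleftrightarrow> (\<forall>B. B \<subseteq> V \<and> closedin (sn_topology V P) B \<and> abs_convex sc B \<and>
       (\<forall>v\<in>V. \<exists>r>0. \<forall>c. norm c \<le> r \<longrightarrow> sc c v \<in> B)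
     \<longrightarrow> (\<exists>U. openin (sn_topology V P) U \<and> 0 \<in> U \<and> U \<subseteq> B))"

definition has_pd :: "('k::real_normed_field \<Rightarrow> 'e \<Rightarrow> 'e) \<Rightarrow> ('l \<Rightarrow> 'e::ab_group_add \<Rightarrow> real) \<Rightarrow> 'n::finite
     \<Rightarrow> (real^'n \<Rightarrow> 'e) \<Rightarrow> real^'n \<Rightarrow> 'e \<Rightarrow> bool" where
  "has_pd sc q n f x v \<longleftrightarrow> (\<forall>l \<epsilon>. \<epsilon> > 0 \<longrightarrow> (\<exists>\<delta>>0. \<forall>h::real. h \<noteq> 0 \<and> \<bar>h\<bar> < \<delta> \<longrightarrow>
       q l (sc (of_real (inverse h)) (f (x + h *\<^sub>R axis n 1) - f x) - v) < \<epsilon>))"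

definition pd :: "('k::real_normed_field \<Rightarrow> 'e \<Rightarrow> 'e) \<Rightarrow> ('l \<Rightarrow> 'e::ab_group_add \<Rightarrow> real) \<Rightarrow> 'n::finite
     \<Rightarrow> (real^'n \<Rightarrow> 'e) \<Rightarrow> real^'n \<Rightarrow> 'e" where
  "pd sc q n f = (\<lambda>x. THE v. has_pd sc q n f x v)"

definition pd_multi :: "('k::real_normed_field \<Rightarrow> 'e \<Rightarrow> 'e) \<Rightarrow> ('l \<Rightarrow> 'e::ab_group_add \<Rightarrow> real) \<Rightarrow> ('n::{finite,linorder} \<Rightarrow> nat)
     \<Rightarrow> ((real,'n) vec \<Rightarrow> 'e) \<Rightarrow> (real,'n) vec \<Rightarrow> 'e" where
  "pd_multi sc q \<beta> f = foldr (\<lambda>n g. (pd sc q n ^^ \<beta> n) g) (sorted_list_of_set UNIV) f"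

definition cont_on_sn :: "('l \<Rightarrow> 'e::ab_group_add \<Rightarrow> real) \<Rightarrow> (real^'n::finite) set \<Rightarrow> (real^'n \<Rightarrow> 'e) \<Rightarrow> bool" where
  "cont_on_sn q \<Omega> f \<longleftrightarrow> (\<forall>x\<in>\<Omega>. \<forall>l \<epsilon>. \<epsilon> > 0 \<longrightarrow> (\<exists>\<delta>>0. \<forall>y\<in>\<Omega>. dist y x < \<delta> \<longrightarrow> q l (f y - f x) < \<epsilon>))"

definition C1_sn :: "('k::real_normed_field \<Rightarrow> 'e \<Rightarrow> 'e) \<Rightarrow> ('l \<Rightarrow> 'e::ab_group_add \<Rightarrow> real) \<Rightarrow> (real^'n::finite) set
     \<Rightarrow> (real^'n \<Rightarrow> 'e) \<Rightarrow> bool" where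
  "C1_sn sc q \<Omega> f \<longleftrightarrow> (\<forall>n. \<forall>x\<in>\<Omega>. \<exists>v. has_pd sc q n f x v) \<and> (\<forall>n. cont_on_sn q \<Omega> (pd sc q n f))"

fun Ck_sn :: "('k::real_normed_field \<Rightarrow> 'e \<Rightarrow> 'e) \<Rightarrow> ('l \<Rightarrow> 'e::ab_group_add \<Rightarrow> real) \<Rightarrow> (real^'n::finite) set
     \<Rightarrow> nat \<Rightarrow> (real^'n \<Rightarrow> 'e) \<Rightarrow> bool" where
  "Ck_sn sc q \<Omega> 0 f = cont_on_sn q \<Omega> f"
| "Ck_sn sc q \<Omega> (Suc k) f = (C1_sn sc q \<Omega> f \<and> (\<forall>n. Ck_sn sc q \<Omega> k (pd sc q n f)))"

definition Ck_enat :: "('k::real_normed_field \<Rightarrow> 'e \<Rightarrow> 'e) \<Rightarrow> ('l \<Rightarrow> 'e::ab_group_add \<Rightarrow> real) \<Rightarrow> (real^'n::finite) set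
     \<Rightarrow> enat \<Rightarrow> (real^'n \<Rightarrow> 'e) \<Rightarrow> bool" where
  "Ck_enat sc q \<Omega> k f = (case k of enat m \<Rightarrow> Ck_sn sc q \<Omega> m f | \<infinity> \<Rightarrow> (\<forall>m. Ck_sn sc q \<Omega> m f))"

definition FV_set :: "(real^'n::finite \<Rightarrow> 'k::real_normed_field) set \<Rightarrow> ('m \<Rightarrow> (real^'n \<Rightarrow> 'k) set)
     \<Rightarrow> ('m \<Rightarrow> (real^'n \<Rightarrow> 'k) \<Rightarrow> 'w \<Rightarrow> 'k) \<Rightarrow> ('m \<Rightarrow> 'w set) \<Rightarrow> ('j \<Rightarrow> 'm \<Rightarrow> 'w \<Rightarrow> real)
     \<Rightarrow> (real^'n \<Rightarrow> 'k) set" where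
  "FV_set AP D T \<omega> \<nu> = {f. f \<in> AP \<and> (\<forall>m. f \<in> D m) \<and>
      (\<forall>j m. bdd_above ((\<lambda>x. norm (T m f x) * \<nu> j m x) ` \<omega> m))}"

definition FV_sn :: "('m \<Rightarrow> (real^'n::finite \<Rightarrow> 'k::real_normed_field) \<Rightarrow> 'w \<Rightarrow> 'k) \<Rightarrow> ('m \<Rightarrow> 'w set)
     \<Rightarrow> ('j \<Rightarrow> 'm \<Rightarrow> 'w \<Rightarrow> real) \<Rightarrow> 'j \<times> 'm \<Rightarrow> (real^'n \<Rightarrow> 'k) \<Rightarrow> real" where
  "FV_sn T \<omega> \<nu> = (\<lambda>(j, m) f. SUP x\<in>\<omega> m. norm (T m f x) * \<nu> j m x)"

end

theory Submission
  imports Defs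
begin

(* S(u) x = u (delta_x).  A difference quotient of S(u) at x in direction e_n is u applied to
   the difference quotient (delta_(x+h e_n) - delta_x) / h of point evaluations, and on every
   f in FV(Omega) these functionals converge to the partial derivative of f at x.  In a barrelled
   space a pointwise convergent sequence of continuous functionals is equicontinuous (its
   prepolar is a barrel), so the limit is again continuous and the convergence is uniform on
   compact sets.  As u is continuous for the topology of uniform convergence on absolutely
   convex compact sets, the difference quotients of S(u) converge, to u applied to
   delta_x o partial^(e_n).  Continuity of the derivatives is obtained in the same way, and
   induction on the order of differentiation gives the theorem. *)

lemma fscale_apply [simp]: "fscale c f x = c * f x"
  by (simp add: fscale_def)

lemma diff_eq_add_fscale_minus_one: "(f :: 'a \<Rightarrow> 'k::real_normed_field) - g = f + fscale (-1) g"
  by (simp add: fun_eq_iff)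

lemma lin_subspace_zero: "lin_subspace S \<Longrightarrow> 0 \<in> S"
  and lin_subspace_add: "lin_subspace S \<Longrightarrow> f \<in> S \<Longrightarrow> g \<in> S \<Longrightarrow> f + g \<in> S"
  and lin_subspace_fscale: "lin_subspace S \<Longrightarrow> f \<in> S \<Longrightarrow> fscale c f \<in> S"
  by (simp_all add: lin_subspace_def)

lemma lin_subspace_diff: "lin_subspace S \<Longrightarrow> f \<in> S \<Longrightarrow> g \<in> S \<Longrightarrow> f - g \<in> S"
  unfolding diff_eq_add_fscale_minus_one by (intro lin_subspace_add lin_subspace_fscale)

lemma sn_nbhd_mono:
  fixes P :: "'i \<Rightarrow> 'v::ab_group_add \<Rightarrow> real"
  shows "I \<subseteq> J \<Longrightarrow> \<epsilon>' \<le> \<epsilon> \<Longrightarrow> {w\<in>V. \<forall>i\<in>J. P i (w - v) < \<epsilon>'} \<subseteq> {w\<in>V. \<forall>i\<in>I. P i (w - v) < \<epsilon>}"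
  by fastforce

lemma istopology_sn:
  fixes P :: "'i \<Rightarrow> 'v::ab_group_add \<Rightarrow> real"
  shows "istopology (\<lambda>U. U \<subseteq> V \<and> (\<forall>v\<in>U. \<exists>I \<epsilon>. finite I \<and> \<epsilon> > 0 \<and> {w\<in>V. \<forall>i\<in>I. P i (w - v) < \<epsilon>} \<subseteq> U))"
  unfolding istopology_def
proof (rule conjI; intro allI impI)
  fix S T
  assume S: "S \<subseteq> V \<and> (\<forall>v\<in>S. \<exists>I \<epsilon>. finite I \<and> \<epsilon> > 0 \<and> {w\<in>V. \<forall>i\<in>I. P i (w - v) < \<epsilon>} \<subseteq> S)"
    and T: "T \<subseteq> V \<and> (\<forall>v\<in>T. \<exists>I \<epsilon>. finite I \<and> \<epsilon> > 0 \<and> {w\<in>V. \<forall>i\<in>I. P i (w - v) < \<epsilon>} \<subseteq> T)"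
  have "\<exists>I \<epsilon>. finite I \<and> \<epsilon> > 0 \<and> {w\<in>V. \<forall>i\<in>I. P i (w - v) < \<epsilon>} \<subseteq> S \<inter> T" if v: "v \<in> S \<inter> T" for v
  proof -
    obtain I1 \<epsilon>1 where 1: "finite I1" "\<epsilon>1 > 0" "{w\<in>V. \<forall>i\<in>I1. P i (w - v) < \<epsilon>1} \<subseteq> S"
      using S v by blast
    obtain I2 \<epsilon>2 where 2: "finite I2" "\<epsilon>2 > 0" "{w\<in>V. \<forall>i\<in>I2. P i (w - v) < \<epsilon>2} \<subseteq> T"
      using T v by blast
    have "{w\<in>V. \<forall>i\<in>I1 \<union> I2. P i (w - v) < min \<epsilon>1 \<epsilon>2} \<subseteq> S \<inter> T"
      by (intro Int_greatest subset_trans[OF sn_nbhd_mono 1(3)] subset_trans[OF sn_nbhd_mono 2(3)]) auto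
    with 1 2 show ?thesis
      by (intro exI[of _ "I1 \<union> I2"] exI[of _ "min \<epsilon>1 \<epsilon>2"] conjI) simp_all
  qed
  with S show "S \<inter> T \<subseteq> V \<and> (\<forall>v\<in>S \<inter> T. \<exists>I \<epsilon>. finite I \<and> \<epsilon> > 0 \<and> {w\<in>V. \<forall>i\<in>I. P i (w - v) < \<epsilon>} \<subseteq> S \<inter> T)"
    by auto
next
  fix \<K> assume \<K>: "\<forall>K\<in>\<K>. K \<subseteq> V \<and> (\<forall>v\<in>K. \<exists>I \<epsilon>. finite I \<and> \<epsilon> > 0 \<and> {w\<in>V. \<forall>i\<in>I. P i (w - v) < \<epsilon>} \<subseteq> K)"
  have "\<exists>I \<epsilon>. finite I \<and> \<epsilon> > 0 \<and> {w\<in>V. \<forall>i\<in>I. P i (w - v) < \<epsilon>} \<subseteq> \<Union>\<K>" if v: "v \<in> \<Union>\<K>" for v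
  proof -
    obtain K where K: "K \<in> \<K>" "v \<in> K" using v by blast
    then obtain I \<epsilon> where "finite I" "\<epsilon> > 0" "{w\<in>V. \<forall>i\<in>I. P i (w - v) < \<epsilon>} \<subseteq> K"
      using \<K>[rule_format, OF K(1), THEN conjunct2, rule_format, OF K(2)] by blast
    with K(1) show ?thesis
      by (intro exI[of _ I] exI[of _ \<epsilon>] conjI subset_trans[OF _ Union_upper]) simp_all
  qed
  with \<K> show "\<Union>\<K> \<subseteq> V \<and> (\<forall>v\<in>\<Union>\<K>. \<exists>I \<epsilon>. finite I \<and> \<epsilon> > 0 \<and> {w\<in>V. \<forall>i\<in>I. P i (w - v) < \<epsilon>} \<subseteq> \<Union>\<K>)"
    by (simp add: Sup_le_iff)
qed

lemma openin_sn_topology: "openin (sn_topology V P) U \<longleftrightarrow> U \<subseteq> V \<and>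
     (\<forall>v\<in>U. \<exists>I \<epsilon>. finite I \<and> \<epsilon> > 0 \<and> {w\<in>V. \<forall>i\<in>I. P i (w - v) < \<epsilon>} \<subseteq> U)"
  unfolding sn_topology_def using istopology_sn[of V P] by simp

lemma topspace_sn_topology: "topspace (sn_topology V P) = V"
proof -
  have "openin (sn_topology V P) V"
    unfolding openin_sn_topology by (auto intro!: exI[of _ "{}"] exI[of _ "1::real"])
  moreover have "U \<subseteq> V" if "openin (sn_topology V P) U" for U
    using that unfolding openin_sn_topology by blast
  ultimately show ?thesis
    unfolding topspace_def by blast
qed

lemma openin_sn_topology_sublevel:
  fixes F :: "'v::ab_group_add \<Rightarrow> real"
  assumes I: "finite I" and C: "C \<ge> 0"
    and F: "\<And>w w'. w \<in> V \<Longrightarrow> w' \<in> V \<Longrightarrow> F w' \<le> F w + C * (\<Sum>i\<in>I. P i (w' - w))"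
  shows "openin (sn_topology V P) {w\<in>V. F w < a}"
  unfolding openin_sn_topology
proof (intro conjI ballI)
  show "{w\<in>V. F w < a} \<subseteq> V" by blast
next
  fix w assume "w \<in> {w\<in>V. F w < a}"
  then have w: "w \<in> V" "F w < a" by auto
  define n where "n = real (card I)"
  define \<delta> where "\<delta> = (a - F w) / ((C + 1) * (n + 1))"
  have n: "n \<ge> 0" by (simp add: n_def)
  have \<delta>: "\<delta> > 0" unfolding \<delta>_def using w(2) C n by (intro divide_pos_pos mult_pos_pos) auto
  have "C * n < (C + 1) * (n + 1)" using C n by (simp add: algebra_simps)
  then have "C * n / ((C + 1) * (n + 1)) < 1" using C n by (simp add: divide_less_eq)
  then have "C * n / ((C + 1) * (n + 1)) * (a - F w) < 1 * (a - F w)"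
    using w(2) by (intro mult_strict_right_mono) auto
  then have C\<delta>: "C * (n * \<delta>) < a - F w" by (simp add: \<delta>_def)
  have sub: "{w'\<in>V. \<forall>i\<in>I. P i (w' - w) < \<delta>} \<subseteq> {w\<in>V. F w < a}"
  proof (intro subsetI, elim CollectE conjE, intro CollectI conjI)
    fix w' assume w': "w' \<in> V" "\<forall>i\<in>I. P i (w' - w) < \<delta>"
    have "(\<Sum>i\<in>I. P i (w' - w)) \<le> n * \<delta>"
      unfolding n_def using w'(2) by (intro sum_bounded_above) (simp add: less_imp_le)
    then have "C * (\<Sum>i\<in>I. P i (w' - w)) \<le> C * (n * \<delta>)"
      using C by (rule mult_left_mono)
    then show "F w' < a" using F[OF w(1) w'(1)] C\<delta> by linarith
  qed simp
  show "\<exists>I \<epsilon>. finite I \<and> \<epsilon> > 0 \<and> {w'\<in>V. \<forall>i\<in>I. P i (w' - w) < \<epsilon>} \<subseteq> {w\<in>V. F w < a}"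
    using I \<delta> sub by blast
qed

lemma dual_sn_abs_le:
  assumes "K \<noteq> {}" and bound: "\<And>f. f \<in> K \<Longrightarrow> norm (\<phi> f) \<le> b"
  shows "\<bar>dual_sn K \<phi>\<bar> \<le> b"
proof -
  obtain f0 where f0: "f0 \<in> K" using assms(1) by blast
  have "bdd_above ((\<lambda>f. norm (\<phi> f)) ` K)" using bound by (intro bdd_aboveI2)
  then have "0 \<le> dual_sn K \<phi>"
    unfolding dual_sn_def using f0 by (meson cSUP_upper norm_ge_zero order_trans)
  moreover have "dual_sn K \<phi> \<le> b"
    unfolding dual_sn_def using assms by (intro cSUP_least) auto
  ultimately show ?thesis by simp
qed

locale seminormed_fun_space =
  fixes V :: "('a \<Rightarrow> 'k::real_normed_field) set" and P :: "'i \<Rightarrow> ('a \<Rightarrow> 'k) \<Rightarrow> real"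
  assumes subspace: "lin_subspace V"
    and sn_nonneg: "\<And>i f. f \<in> V \<Longrightarrow> 0 \<le> P i f"
    and sn_add: "\<And>i f g. f \<in> V \<Longrightarrow> g \<in> V \<Longrightarrow> P i (f + g) \<le> P i f + P i g"
    and sn_fscale: "\<And>i c f. f \<in> V \<Longrightarrow> P i (fscale c f) \<le> norm c * P i f"
begin

abbreviation V_dual :: "(('a \<Rightarrow> 'k) \<Rightarrow> 'k) set" where
  "V_dual \<equiv> dual_sp fscale V P"

lemma sn_zero: "P i 0 = 0"
proof -
  have "P i (fscale 0 0) \<le> 0"
    using sn_fscale[OF lin_subspace_zero[OF subspace], of i 0] by simp
  moreover have "fscale 0 0 = (0 :: 'a \<Rightarrow> 'k)" by (simp add: fun_eq_iff)
  ultimately show ?thesis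
    using sn_nonneg[OF lin_subspace_zero[OF subspace]] by (simp add: antisym)
qed

lemma sn_diff_triangle: "f \<in> V \<Longrightarrow> g \<in> V \<Longrightarrow> h \<in> V \<Longrightarrow> P i (f - h) \<le> P i (f - g) + P i (g - h)"
  using sn_add[of "f - g" "g - h"] lin_subspace_diff[OF subspace] by simp

lemma dual_sp_add: "\<phi> \<in> V_dual \<Longrightarrow> f \<in> V \<Longrightarrow> g \<in> V \<Longrightarrow> \<phi> (f + g) = \<phi> f + \<phi> g"
  and dual_sp_fscale: "\<phi> \<in> V_dual \<Longrightarrow> f \<in> V \<Longrightarrow> \<phi> (fscale c f) = c * \<phi> f"
  by (simp_all add: dual_sp_def lin_on_def)

lemma dual_sp_diff: "\<phi> \<in> V_dual \<Longrightarrow> f \<in> V \<Longrightarrow> g \<in> V \<Longrightarrow> \<phi> (f - g) = \<phi> f - \<phi> g"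
  unfolding diff_eq_add_fscale_minus_one
  by (simp add: dual_sp_add dual_sp_fscale lin_subspace_fscale[OF subspace])

lemma dual_sp_bound:
  assumes "\<phi> \<in> V_dual"
  shows "\<exists>I C. finite I \<and> C \<ge> 0 \<and> (\<forall>f\<in>V. norm (\<phi> f) \<le> C * (\<Sum>i\<in>I. P i f))"
proof -
  obtain I C where I: "finite I" and C: "\<forall>f\<in>V. norm (\<phi> f) \<le> C * (\<Sum>i\<in>I. P i f)"
    using assms by (auto simp: dual_sp_def cont_lin_sn_def)
  have "norm (\<phi> f) \<le> max C 0 * (\<Sum>i\<in>I. P i f)" if "f \<in> V" for f
  proof -
    have "norm (\<phi> f) \<le> C * (\<Sum>i\<in>I. P i f)" using C that by blast
    also have "\<dots> \<le> max C 0 * (\<Sum>i\<in>I. P i f)"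
      using that by (intro mult_right_mono) (auto intro: sum_nonneg sn_nonneg)
    finally show ?thesis .
  qed
  with I show ?thesis by (intro exI[of _ I] exI[of _ "max C 0"]) auto
qed

lemma dual_spI:
  assumes "\<And>f. f \<notin> V \<Longrightarrow> \<phi> f = 0"
    and "\<And>f g. f \<in> V \<Longrightarrow> g \<in> V \<Longrightarrow> \<phi> (f + g) = \<phi> f + \<phi> g"
    and "\<And>c f. f \<in> V \<Longrightarrow> \<phi> (fscale c f) = c * \<phi> f"
    and "finite I" "\<And>f. f \<in> V \<Longrightarrow> norm (\<phi> f) \<le> C * (\<Sum>i\<in>I. P i f)"
  shows "\<phi> \<in> V_dual"
proof -
  have "cont_lin_sn UNIV P (\<lambda>_::unit. norm) V \<phi>"
    unfolding cont_lin_sn_def using assms(4,5) by blast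
  with assms(1-3) show ?thesis by (simp add: dual_sp_def lin_on_def)
qed

lemma dual_sp_closed_add:
  assumes \<phi>: "\<phi> \<in> V_dual" and \<psi>: "\<psi> \<in> V_dual"
  shows "\<phi> + \<psi> \<in> V_dual"
proof -
  obtain I C where I: "finite I" "C \<ge> 0" "\<forall>f\<in>V. norm (\<phi> f) \<le> C * (\<Sum>i\<in>I. P i f)"
    using dual_sp_bound[OF \<phi>] by metis
  obtain J D where J: "finite J" "D \<ge> 0" "\<forall>f\<in>V. norm (\<psi> f) \<le> D * (\<Sum>i\<in>J. P i f)"
    using dual_sp_bound[OF \<psi>] by metis
  have "norm ((\<phi> + \<psi>) f) \<le> (C + D) * (\<Sum>i\<in>I \<union> J. P i f)" if f: "f \<in> V" for f
  proof -
    have "(\<Sum>i\<in>I. P i f) \<le> (\<Sum>i\<in>I \<union> J. P i f)" "(\<Sum>i\<in>J. P i f) \<le> (\<Sum>i\<in>I \<union> J. P i f)"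
      using I(1) J(1) f by (auto intro!: sum_mono2 sn_nonneg)
    then have "C * (\<Sum>i\<in>I. P i f) + D * (\<Sum>i\<in>J. P i f) \<le> (C + D) * (\<Sum>i\<in>I \<union> J. P i f)"
      using I(2) J(2) by (simp add: distrib_right add_mono mult_left_mono)
    moreover have "norm (\<phi> f) \<le> C * (\<Sum>i\<in>I. P i f)" "norm (\<psi> f) \<le> D * (\<Sum>i\<in>J. P i f)"
      using I(3) J(3) f by auto
    ultimately show ?thesis
      using norm_triangle_ineq[of "\<phi> f" "\<psi> f"] by simp
  qed
  with \<phi> \<psi> I(1) J(1) show ?thesis
    by (intro dual_spI[of _ "I \<union> J" "C + D"]) (auto simp: dual_sp_def lin_on_def distrib_left)
qed

lemma dual_sp_closed_fscale:
  assumes \<phi>: "\<phi> \<in> V_dual"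
  shows "fscale c \<phi> \<in> V_dual"
proof -
  obtain I C where I: "finite I" "C \<ge> 0" "\<forall>f\<in>V. norm (\<phi> f) \<le> C * (\<Sum>i\<in>I. P i f)"
    using dual_sp_bound[OF \<phi>] by metis
  have "norm (fscale c \<phi> f) \<le> (norm c * C) * (\<Sum>i\<in>I. P i f)" if "f \<in> V" for f
    using I(3) that by (simp add: norm_mult mult.assoc mult_left_mono)
  with \<phi> I(1) show ?thesis
    by (intro dual_spI[of _ I "norm c * C"]) (auto simp: dual_sp_def lin_on_def distrib_left)
qed

lemma dual_sp_closed_diff: "\<phi> \<in> V_dual \<Longrightarrow> \<psi> \<in> V_dual \<Longrightarrow> \<phi> - \<psi> \<in> V_dual"
  unfolding diff_eq_add_fscale_minus_one by (intro dual_sp_closed_add dual_sp_closed_fscale)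

lemma openin_dual_norm_gt:
  assumes "\<phi> \<in> V_dual"
  shows "openin (sn_topology V P) {f\<in>V. c < norm (\<phi> f)}"
proof -
  obtain I C where I: "finite I" "C \<ge> 0" "\<forall>f\<in>V. norm (\<phi> f) \<le> C * (\<Sum>i\<in>I. P i f)"
    using dual_sp_bound[OF assms] by metis
  have "- norm (\<phi> f') \<le> - norm (\<phi> f) + C * (\<Sum>i\<in>I. P i (f' - f))" if "f \<in> V" "f' \<in> V" for f f'
  proof -
    have "norm (\<phi> f' - \<phi> f) \<le> C * (\<Sum>i\<in>I. P i (f' - f))"
      using I(3) lin_subspace_diff[OF subspace that(2,1)] dual_sp_diff[OF assms that(2,1)] by metis
    then show ?thesis using norm_triangle_ineq3[of "\<phi> f'" "\<phi> f"] by linarith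
  qed
  then have "openin (sn_topology V P) {f\<in>V. - norm (\<phi> f) < - c}"
    by (intro openin_sn_topology_sublevel[OF I(1,2)])
  then show ?thesis by simp
qed

lemma openin_sn_sum_lt:
  assumes "finite I" "g \<in> V"
  shows "openin (sn_topology V P) {f\<in>V. (\<Sum>i\<in>I. P i (f - g)) < \<eta>}"
proof (rule openin_sn_topology_sublevel[OF assms(1), of 1])
  fix f f' assume "f \<in> V" "f' \<in> V"
  then have "(\<Sum>i\<in>I. P i (f' - g)) \<le> (\<Sum>i\<in>I. P i (f' - f) + P i (f - g))"
    using assms(2) by (intro sum_mono sn_diff_triangle)
  then show "(\<Sum>i\<in>I. P i (f' - g)) \<le> (\<Sum>i\<in>I. P i (f - g)) + 1 * (\<Sum>i\<in>I. P i (f' - f))"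
    by (simp add: sum.distrib)
qed simp

definition prepolar :: "(('a \<Rightarrow> 'k) \<Rightarrow> 'k) set \<Rightarrow> ('a \<Rightarrow> 'k) set" where
  "prepolar H = {f\<in>V. \<forall>\<phi>\<in>H. norm (\<phi> f) \<le> 1}"

lemma closedin_prepolar:
  assumes "H \<subseteq> V_dual"
  shows "closedin (sn_topology V P) (prepolar H)"
proof -
  have "V - prepolar H = (\<Union>\<phi>\<in>H. {f\<in>V. 1 < norm (\<phi> f)})"
    by (auto simp: prepolar_def not_le)
  moreover have "openin (sn_topology V P) (\<Union>\<phi>\<in>H. {f\<in>V. 1 < norm (\<phi> f)})"
    using assms by (intro openin_Union) (auto intro: openin_dual_norm_gt)
  ultimately show ?thesis
    unfolding closedin_def topspace_sn_topology by (auto simp: prepolar_def)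
qed

lemma abs_convex_prepolar:
  assumes "H \<subseteq> V_dual"
  shows "abs_convex fscale (prepolar H)"
  unfolding abs_convex_def
proof (intro ballI allI impI)
  fix f g and a b :: 'k
  assume f: "f \<in> prepolar H" and g: "g \<in> prepolar H" and ab: "norm a + norm b \<le> 1"
  have V: "f \<in> V" "g \<in> V" using f g by (auto simp: prepolar_def)
  have "norm (\<phi> (fscale a f + fscale b g)) \<le> 1" if \<phi>: "\<phi> \<in> H" for \<phi>
  proof -
    have "norm (\<phi> (fscale a f + fscale b g)) = norm (a * \<phi> f + b * \<phi> g)"
      using assms \<phi> V by (auto simp: dual_sp_add dual_sp_fscale lin_subspace_fscale[OF subspace])
    also have "\<dots> \<le> norm a * norm (\<phi> f) + norm b * norm (\<phi> g)"
      by (metis norm_mult norm_triangle_ineq)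
    also have "\<dots> \<le> norm a + norm b"
      using f g \<phi> by (intro add_mono mult_left_le) (auto simp: prepolar_def)
    finally show ?thesis using ab by linarith
  qed
  then show "fscale a f + fscale b g \<in> prepolar H"
    using V by (simp add: prepolar_def lin_subspace_add lin_subspace_fscale subspace)
qed

lemma absorbing_prepolar:
  assumes H: "H \<subseteq> V_dual" and bounded: "\<And>f. f \<in> V \<Longrightarrow> \<exists>M. \<forall>\<phi>\<in>H. norm (\<phi> f) \<le> M"
  shows "\<forall>f\<in>V. \<exists>r>0. \<forall>c. norm c \<le> r \<longrightarrow> fscale c f \<in> prepolar H"
proof
  fix f assume f: "f \<in> V"
  obtain M where M: "\<forall>\<phi>\<in>H. norm (\<phi> f) \<le> M" using bounded f by blast
  define r where "r = 1 / (\<bar>M\<bar> + 1)"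
  have "fscale c f \<in> prepolar H" if c: "norm c \<le> r" for c
  proof -
    have "norm (\<phi> (fscale c f)) \<le> 1" if \<phi>: "\<phi> \<in> H" for \<phi>
    proof -
      have "norm (\<phi> (fscale c f)) = norm c * norm (\<phi> f)"
        using H \<phi> f by (auto simp: dual_sp_fscale norm_mult)
      also have "\<dots> \<le> r * \<bar>M\<bar>"
        using c M \<phi> by (intro mult_mono) (auto simp: r_def intro: order_trans[OF _ abs_ge_self])
      also have "\<dots> \<le> 1" by (simp add: r_def field_simps)
      finally show ?thesis .
    qed
    then show ?thesis using f by (simp add: prepolar_def lin_subspace_fscale[OF subspace])
  qed
  moreover have "r > 0" by (simp add: r_def add_pos_nonneg)
  ultimately show "\<exists>r>0. \<forall>c. norm c \<le> r \<longrightarrow> fscale c f \<in> prepolar H" by blast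
qed

lemma bound_if_nbhd_subset_prepolar:
  assumes H: "H \<subseteq> V_dual" "\<phi> \<in> H" and I: "finite I" and \<epsilon>: "\<epsilon> > 0"
    and nbhd: "{f\<in>V. \<forall>i\<in>I. P i f < \<epsilon>} \<subseteq> prepolar H" and f: "f \<in> V"
  shows "norm (\<phi> f) \<le> (1 / \<epsilon>) * (\<Sum>i\<in>I. P i f)"
proof (rule field_le_epsilon)
  fix e :: real assume e: "e > 0"
  define s where "s = (\<Sum>i\<in>I. P i f)"
  define t where "t = \<epsilon> / (s + \<epsilon> * e)"
  have s: "s \<ge> 0" using f by (simp add: s_def sum_nonneg sn_nonneg)
  have \<epsilon>e: "\<epsilon> * e > 0" using \<epsilon> e by simp
  have t: "t > 0" using s \<epsilon> \<epsilon>e by (simp add: t_def)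
  have "P i (fscale (of_real t) f) < \<epsilon>" if i: "i \<in> I" for i
  proof -
    have "P i (fscale (of_real t) f) \<le> t * P i f"
      using sn_fscale[OF f, of i "of_real t"] t by simp
    also have "\<dots> \<le> t * s"
      using I i f t unfolding s_def by (intro mult_left_mono member_le_sum sn_nonneg) auto
    also have "t * s < \<epsilon>"
      using s \<epsilon> \<epsilon>e by (simp add: t_def field_simps)
    finally show ?thesis .
  qed
  then have "fscale (of_real t) f \<in> prepolar H"
    using nbhd f lin_subspace_fscale[OF subspace f] by blast
  then have "norm (\<phi> (fscale (of_real t) f)) \<le> 1"
    using H(2) by (simp add: prepolar_def)
  moreover have "\<phi> \<in> V_dual" using H by blast
  ultimately have "t * norm (\<phi> f) \<le> 1"
    using dual_sp_fscale[of \<phi> f "of_real t"] f t by (simp add: norm_mult)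
  then have "norm (\<phi> f) \<le> 1 / t" using t by (simp add: field_simps)
  also have "1 / t = (1 / \<epsilon>) * s + e" using \<epsilon> s \<epsilon>e by (simp add: t_def field_simps)
  finally show "norm (\<phi> f) \<le> (1 / \<epsilon>) * (\<Sum>i\<in>I. P i f) + e" by (simp add: s_def)
qed

lemma compactin_finite_sn_net:
  assumes K: "compactin (sn_topology V P) K" "K \<subseteq> V" and I: "finite I" and \<eta>: "\<eta> > 0"
  shows "\<exists>G. finite G \<and> G \<subseteq> K \<and> (\<forall>f\<in>K. \<exists>g\<in>G. (\<Sum>i\<in>I. P i (f - g)) < \<eta>)"
proof -
  define nbhd where "nbhd g = {f\<in>V. (\<Sum>i\<in>I. P i (f - g)) < \<eta>}" for g
  have "\<forall>U\<in>nbhd ` K. openin (sn_topology V P) U"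
    using K(2) by (auto simp: nbhd_def intro: openin_sn_sum_lt[OF I])
  moreover have "K \<subseteq> \<Union>(nbhd ` K)"
  proof
    fix g assume g: "g \<in> K"
    then have "g \<in> nbhd g" using K(2) \<eta> by (auto simp: nbhd_def sn_zero)
    with g show "g \<in> \<Union>(nbhd ` K)" by blast
  qed
  ultimately have "\<exists>\<F>. finite \<F> \<and> \<F> \<subseteq> nbhd ` K \<and> K \<subseteq> \<Union>\<F>"
    using K(1) unfolding compactin_def by blast
  then obtain \<F> where \<F>: "finite \<F>" "\<F> \<subseteq> nbhd ` K" "K \<subseteq> \<Union>\<F>" by blast
  obtain G where G: "G \<subseteq> K" "finite G" "\<F> = nbhd ` G"
    using finite_subset_image[OF \<F>(1,2)] by blast
  have "\<forall>f\<in>K. \<exists>g\<in>G. (\<Sum>i\<in>I. P i (f - g)) < \<eta>"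
    using \<F>(3) G(3) by (auto simp: nbhd_def)
  with G(1,2) show ?thesis by blast
qed

lemma dual_sn_tendsto_zero_if_equibounded:
  assumes \<theta>: "\<And>j. \<theta> j \<in> V_dual" and I: "finite I" and C: "C \<ge> 0"
    and bound: "\<And>j f. f \<in> V \<Longrightarrow> norm (\<theta> j f) \<le> C * (\<Sum>i\<in>I. P i f)"
    and conv: "\<And>f. f \<in> V \<Longrightarrow> (\<lambda>j. \<theta> j f) \<longlonglongrightarrow> 0"
    and K: "K \<in> acx_compacts fscale V P"
  shows "(\<lambda>j. dual_sn K (\<theta> j)) \<longlonglongrightarrow> 0"
proof (rule tendstoI)
  fix r :: real assume r: "r > 0"
  from K have K: "K \<noteq> {}" "K \<subseteq> V" "compactin (sn_topology V P) K"
    by (auto simp: acx_compacts_def)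
  define \<eta> where "\<eta> = r / (4 * (C + 1))"
  have \<eta>: "\<eta> > 0" using C r by (simp add: \<eta>_def)
  have "C * r \<le> (C + 1) * r" using r by simp
  then have C\<eta>: "C * \<eta> \<le> r / 4" using C by (simp add: \<eta>_def field_simps)
  obtain G where G: "finite G" "G \<subseteq> K" "\<forall>f\<in>K. \<exists>g\<in>G. (\<Sum>i\<in>I. P i (f - g)) < \<eta>"
    using compactin_finite_sn_net[OF K(3,2) I \<eta>] by blast
  have "\<forall>\<^sub>F j in sequentially. norm (\<theta> j g) < r / 2" if "g \<in> G" for g
    using tendstoD[OF conv, of g "r / 2"] that G(2) K(2) r by auto
  then have "\<forall>\<^sub>F j in sequentially. \<forall>g\<in>G. norm (\<theta> j g) < r / 2"
    using G(1) by (simp add: eventually_ball_finite)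
  then show "\<forall>\<^sub>F j in sequentially. dist (dual_sn K (\<theta> j)) 0 < r"
  proof (rule eventually_mono)
    fix j assume near: "\<forall>g\<in>G. norm (\<theta> j g) < r / 2"
    have bound_K: "norm (\<theta> j f) \<le> 3 * r / 4" if f: "f \<in> K" for f
    proof -
      obtain g where g: "g \<in> G" "(\<Sum>i\<in>I. P i (f - g)) < \<eta>" using G(3) f by blast
      then have V: "f \<in> V" "g \<in> V" using f G(2) K(2) by auto
      have "norm (\<theta> j (f - g)) \<le> C * (\<Sum>i\<in>I. P i (f - g))"
        using bound lin_subspace_diff[OF subspace V] by blast
      also have "\<dots> \<le> C * \<eta>" using g(2) C by (intro mult_left_mono) auto
      finally have "norm (\<theta> j (f - g)) \<le> r / 4" using C\<eta> by linarith
      moreover have "\<theta> j f = \<theta> j (f - g) + \<theta> j g" using dual_sp_diff[OF \<theta> V] by simp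
      then have "norm (\<theta> j f) \<le> norm (\<theta> j (f - g)) + norm (\<theta> j g)"
        by (metis norm_triangle_ineq)
      moreover have "norm (\<theta> j g) < r / 2" using near g(1) by blast
      ultimately show ?thesis by linarith
    qed
    have "\<bar>dual_sn K (\<theta> j)\<bar> \<le> 3 * r / 4" using dual_sn_abs_le[OF K(1) bound_K] .
    then show "dist (dual_sn K (\<theta> j)) 0 < r" using r by simp
  qed
qed

end

locale barrelled_fun_space = seminormed_fun_space +
  assumes barrelled: "barrelled fscale V P"
begin

lemma equicontinuous_if_pointwise_bounded:
  assumes H: "H \<subseteq> V_dual" and bounded: "\<And>f. f \<in> V \<Longrightarrow> \<exists>M. \<forall>\<phi>\<in>H. norm (\<phi> f) \<le> M"
  shows "\<exists>I C. finite I \<and> C \<ge> 0 \<and> (\<forall>\<phi>\<in>H. \<forall>f\<in>V. norm (\<phi> f) \<le> C * (\<Sum>i\<in>I. P i f))"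
proof -
  have "prepolar H \<subseteq> V \<and> closedin (sn_topology V P) (prepolar H) \<and> abs_convex fscale (prepolar H) \<and>
      (\<forall>f\<in>V. \<exists>r>0. \<forall>c. norm c \<le> r \<longrightarrow> fscale c f \<in> prepolar H)"
    using closedin_prepolar[OF H] abs_convex_prepolar[OF H] absorbing_prepolar[OF H bounded]
    by (auto simp: prepolar_def)
  then have "\<exists>U. openin (sn_topology V P) U \<and> 0 \<in> U \<and> U \<subseteq> prepolar H"
    by (rule barrelled[unfolded barrelled_def, rule_format])
  then obtain U where U: "openin (sn_topology V P) U" "0 \<in> U" "U \<subseteq> prepolar H" by blast
  have "\<exists>I \<epsilon>. finite I \<and> \<epsilon> > 0 \<and> {f\<in>V. \<forall>i\<in>I. P i (f - 0) < \<epsilon>} \<subseteq> U"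
    using U(1)[unfolded openin_sn_topology, THEN conjunct2, rule_format, OF U(2)] .
  then obtain I \<epsilon> where I: "finite I" "\<epsilon> > 0" "{f\<in>V. \<forall>i\<in>I. P i (f - 0) < \<epsilon>} \<subseteq> U"
    by blast
  then have nbhd: "{f\<in>V. \<forall>i\<in>I. P i f < \<epsilon>} \<subseteq> prepolar H" using U(3) by auto
  have "\<forall>\<phi>\<in>H. \<forall>f\<in>V. norm (\<phi> f) \<le> (1 / \<epsilon>) * (\<Sum>i\<in>I. P i f)"
    using bound_if_nbhd_subset_prepolar[OF H _ I(1,2) nbhd] by simp
  with I(1,2) show ?thesis by (intro exI[of _ I] exI[of _ "1 / \<epsilon>"]) auto
qed

lemma equicontinuous_if_pointwise_convergent:
  assumes \<theta>: "\<And>j. \<theta> j \<in> V_dual" and conv: "\<And>f. f \<in> V \<Longrightarrow> convergent (\<lambda>j. \<theta> j f)"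
  shows "\<exists>I C. finite I \<and> C \<ge> 0 \<and> (\<forall>j. \<forall>f\<in>V. norm (\<theta> j f) \<le> C * (\<Sum>i\<in>I. P i f))"
proof -
  have "\<exists>M. \<forall>\<phi>\<in>range \<theta>. norm (\<phi> f) \<le> M" if "f \<in> V" for f
    using convergent_imp_Bseq[OF conv[OF that]] by (auto simp: Bseq_def)
  then have "\<exists>I C. finite I \<and> C \<ge> 0 \<and> (\<forall>\<phi>\<in>range \<theta>. \<forall>f\<in>V. norm (\<phi> f) \<le> C * (\<Sum>i\<in>I. P i f))"
    using \<theta> by (intro equicontinuous_if_pointwise_bounded) auto
  then show ?thesis by simp
qed

lemma pointwise_limit_in_dual:
  assumes \<phi>: "\<And>j. \<phi> j \<in> V_dual" and \<psi>_out: "\<And>f. f \<notin> V \<Longrightarrow> \<psi> f = 0"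
    and conv: "\<And>f. f \<in> V \<Longrightarrow> (\<lambda>j. \<phi> j f) \<longlonglongrightarrow> \<psi> f"
  shows "\<psi> \<in> V_dual"
proof -
  obtain I C where I: "finite I" and bound: "\<forall>j. \<forall>f\<in>V. norm (\<phi> j f) \<le> C * (\<Sum>i\<in>I. P i f)"
    using equicontinuous_if_pointwise_convergent[OF \<phi> convergentI[OF conv]] by blast
  have "\<psi> (f + g) = \<psi> f + \<psi> g" if f: "f \<in> V" and g: "g \<in> V" for f g
  proof -
    have "(\<lambda>j. \<phi> j (f + g)) \<longlonglongrightarrow> \<psi> f + \<psi> g"
      using tendsto_add[OF conv[OF f] conv[OF g]] dual_sp_add[OF \<phi> f g] by simp
    then show ?thesis using conv[OF lin_subspace_add[OF subspace f g]] LIMSEQ_unique by blast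
  qed
  moreover have "\<psi> (fscale c f) = c * \<psi> f" if f: "f \<in> V" for c f
  proof -
    have "(\<lambda>j. \<phi> j (fscale c f)) \<longlonglongrightarrow> c * \<psi> f"
      using tendsto_mult_left[OF conv[OF f]] dual_sp_fscale[OF \<phi> f] by simp
    then show ?thesis using conv[OF lin_subspace_fscale[OF subspace f]] LIMSEQ_unique by blast
  qed
  moreover have "norm (\<psi> f) \<le> C * (\<Sum>i\<in>I. P i f)" if f: "f \<in> V" for f
    using tendsto_norm[OF conv[OF f]] bound f by (intro LIMSEQ_le_const2) auto
  ultimately show ?thesis
    using \<psi>_out I by (intro dual_spI) auto
qed

lemma limit_within_in_dual:
  fixes a :: "'z::first_countable_topology"
  assumes a: "a islimpt S" and \<Phi>: "\<And>y. y \<in> S \<Longrightarrow> \<Phi> y \<in> V_dual"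
    and \<psi>_out: "\<And>f. f \<notin> V \<Longrightarrow> \<psi> f = 0"
    and conv: "\<And>f. f \<in> V \<Longrightarrow> ((\<lambda>y. \<Phi> y f) \<longlongrightarrow> \<psi> f) (at a within S)"
  shows "\<psi> \<in> V_dual"
proof -
  obtain y :: "nat \<Rightarrow> 'z" where y: "\<And>j. y j \<in> S - {a}" "y \<longlonglongrightarrow> a"
    using a unfolding islimpt_sequential by blast
  show ?thesis
  proof (rule pointwise_limit_in_dual[OF _ \<psi>_out])
    show "\<Phi> (y j) \<in> V_dual" for j using \<Phi> y(1) by blast
    show "(\<lambda>j. \<Phi> (y j) f) \<longlonglongrightarrow> \<psi> f" if "f \<in> V" for f
      using conv[OF that] y unfolding tendsto_at_iff_sequentially comp_def by blast
  qed
qed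

lemma dual_sn_tendsto_zero:
  assumes \<theta>: "\<And>j. \<theta> j \<in> V_dual" and conv: "\<And>f. f \<in> V \<Longrightarrow> (\<lambda>j. \<theta> j f) \<longlonglongrightarrow> 0"
    and K: "K \<in> acx_compacts fscale V P"
  shows "(\<lambda>j. dual_sn K (\<theta> j)) \<longlonglongrightarrow> 0"
proof -
  obtain I C where "finite I" "C \<ge> 0" "\<forall>j. \<forall>f\<in>V. norm (\<theta> j f) \<le> C * (\<Sum>i\<in>I. P i f)"
    using equicontinuous_if_pointwise_convergent[OF \<theta> convergentI[OF conv]] by blast
  then show ?thesis
    using \<theta> conv K by (intro dual_sn_tendsto_zero_if_equibounded) auto
qed

end

locale lc_space =
  fixes scE :: "'k::real_normed_field \<Rightarrow> 'e::ab_group_add \<Rightarrow> 'e" and qE :: "'l \<Rightarrow> 'e \<Rightarrow> real"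
  assumes lc: "lc_hausdorff scE qE"
begin

lemma qE_separating: "(\<And>l. qE l x = 0) \<Longrightarrow> x = 0"
  using lc by (simp add: lc_hausdorff_def)

lemma module_scE: "module scE"
  using lc by (simp add: lc_hausdorff_def module_iff_vector_space)

lemma scE_minus_one: "scE (-1) x = - x"
  using module.scale_minus_left[OF module_scE, of 1 x] module.scale_one[OF module_scE, of x] by simp

lemma qE_add: "qE l (x + y) \<le> qE l x + qE l y"
  and qE_scale: "qE l (scE c x) = norm c * qE l x"
  using lc by (simp_all add: lc_hausdorff_def is_seminorm_def)

lemma qE_minus: "qE l (- x) = qE l x"
  using qE_scale[of l "-1" x] scE_minus_one by simp

lemma qE_zero: "qE l 0 = 0"
  using qE_scale[of l 0 0] module.scale_zero_left[OF module_scE] by simp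

lemma qE_nonneg: "0 \<le> qE l x"
  using qE_add[of l x "- x"] qE_zero qE_minus by simp

lemma qE_minus_commute: "qE l (x - y) = qE l (y - x)"
  using qE_minus[of l "y - x"] by simp

lemma has_pd_unique:
  assumes v: "has_pd scE qE n g x v" and v': "has_pd scE qE n g x v'"
  shows "v = v'"
proof -
  have "qE l (v - v') \<le> 0" for l
  proof (rule field_le_epsilon)
    fix e :: real assume e: "e > 0"
    define quot where "quot h = scE (of_real (inverse h)) (g (x + h *\<^sub>R axis n 1) - g x)" for h
    obtain d where d: "d > 0" "\<forall>h. h \<noteq> 0 \<and> \<bar>h\<bar> < d \<longrightarrow> qE l (quot h - v) < e / 2"
      using v e unfolding has_pd_def quot_def by (meson half_gt_zero)
    obtain d' where d': "d' > 0" "\<forall>h. h \<noteq> 0 \<and> \<bar>h\<bar> < d' \<longrightarrow> qE l (quot h - v') < e / 2"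
      using v' e unfolding has_pd_def quot_def by (meson half_gt_zero)
    define h where "h = min d d' / 2"
    have h: "h \<noteq> 0" "\<bar>h\<bar> < d" "\<bar>h\<bar> < d'" using d d' by (auto simp: h_def)
    have "qE l (v - v') \<le> qE l (v - quot h) + qE l (quot h - v')"
      using qE_add[of l "v - quot h" "quot h - v'"] by simp
    moreover have "qE l (v - quot h) < e / 2" "qE l (quot h - v') < e / 2"
      using d d' h qE_minus_commute by auto
    ultimately show "qE l (v - v') \<le> 0 + e" by simp
  qed
  then have "qE l (v - v') = 0" for l using qE_nonneg[of l "v - v'"] by (simp add: antisym)
  then show ?thesis using qE_separating[of "v - v'"] by simp
qed

lemma pd_eqI: "has_pd scE qE n g x v \<Longrightarrow> pd scE qE n g x = v"
  unfolding pd_def using has_pd_unique by blast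

end

lemma has_pd_scalar_iff:
  "has_pd (*) (\<lambda>_::unit. norm) n g x v \<longleftrightarrow>
     ((\<lambda>h. of_real (inverse h) * (g (x + h *\<^sub>R axis n 1) - g x)) \<longlongrightarrow> v) (at 0)"
  by (simp add: has_pd_def LIM_eq)

lemma pd_scalar_eqI: "has_pd (*) (\<lambda>_::unit. norm) n g x v \<Longrightarrow> pd (*) (\<lambda>_::unit. norm) n g x = v"
  unfolding pd_def has_pd_scalar_iff by (blast intro: the_equality tendsto_unique[OF trivial_limit_at])

lemma cont_on_sn_scalar_iff: "cont_on_sn (\<lambda>_::unit. norm) \<Omega> g \<longleftrightarrow> continuous_on \<Omega> g"
  by (simp add: cont_on_sn_def continuous_on_iff dist_norm)

locale eps_prod_element = barrelled_fun_space V P + lc_space scE qE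
  for V :: "('a \<Rightarrow> 'k::real_normed_field) set" and P :: "'i \<Rightarrow> ('a \<Rightarrow> 'k) \<Rightarrow> real"
    and scE :: "'k \<Rightarrow> 'e::ab_group_add \<Rightarrow> 'e" and qE :: "'l \<Rightarrow> 'e \<Rightarrow> real" +
  fixes u :: "(('a \<Rightarrow> 'k) \<Rightarrow> 'k) \<Rightarrow> 'e"
  assumes eps_prod: "u \<in> eps_prod fscale V P scE qE"
begin

lemma u_add: "\<phi> \<in> V_dual \<Longrightarrow> \<psi> \<in> V_dual \<Longrightarrow> u (\<phi> + \<psi>) = u \<phi> + u \<psi>"
  and u_fscale: "\<phi> \<in> V_dual \<Longrightarrow> u (fscale c \<phi>) = scE c (u \<phi>)"
  using eps_prod by (simp_all add: eps_prod_def lin_on_def)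

lemma u_diff: "\<phi> \<in> V_dual \<Longrightarrow> \<psi> \<in> V_dual \<Longrightarrow> u (\<phi> - \<psi>) = u \<phi> - u \<psi>"
  unfolding diff_eq_add_fscale_minus_one
  by (simp add: u_add u_fscale dual_sp_closed_fscale scE_minus_one)

lemma u_eventually_close_sequentially:
  assumes \<phi>: "\<And>j. \<phi> j \<in> V_dual" and \<psi>: "\<psi> \<in> V_dual"
    and conv: "\<And>f. f \<in> V \<Longrightarrow> (\<lambda>j. \<phi> j f) \<longlonglongrightarrow> \<psi> f" and \<epsilon>: "\<epsilon> > 0"
  shows "\<forall>\<^sub>F j in sequentially. qE l (u (\<phi> j) - u \<psi>) < \<epsilon>"
proof -
  obtain Ks C where Ks: "finite Ks" "Ks \<subseteq> acx_compacts fscale V P"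
    and bound: "\<forall>\<phi>\<in>V_dual. qE l (u \<phi>) \<le> C * (\<Sum>K\<in>Ks. dual_sn K \<phi>)"
    using eps_prod unfolding eps_prod_def cont_lin_sn_def by blast
  have "(\<lambda>j. dual_sn K (\<phi> j - \<psi>)) \<longlonglongrightarrow> 0" if "K \<in> Ks" for K
    using Ks(2) that LIM_zero[OF conv] by (intro dual_sn_tendsto_zero dual_sp_closed_diff \<phi> \<psi>) auto
  then have "(\<lambda>j. C * (\<Sum>K\<in>Ks. dual_sn K (\<phi> j - \<psi>))) \<longlonglongrightarrow> 0"
    by (intro tendsto_mult_right_zero tendsto_null_sum)
  then have "\<forall>\<^sub>F j in sequentially. C * (\<Sum>K\<in>Ks. dual_sn K (\<phi> j - \<psi>)) < \<epsilon>"
    using \<epsilon> by (rule order_tendstoD)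
  then show ?thesis
  proof (rule eventually_mono)
    fix j assume "C * (\<Sum>K\<in>Ks. dual_sn K (\<phi> j - \<psi>)) < \<epsilon>"
    moreover have "qE l (u (\<phi> j - \<psi>)) \<le> C * (\<Sum>K\<in>Ks. dual_sn K (\<phi> j - \<psi>))"
      using bound dual_sp_closed_diff[OF \<phi> \<psi>] by blast
    ultimately show "qE l (u (\<phi> j) - u \<psi>) < \<epsilon>" using u_diff[OF \<phi> \<psi>] by simp
  qed
qed

lemma u_eventually_close_within:
  fixes \<Phi> :: "'b::first_countable_topology \<Rightarrow> ('a \<Rightarrow> 'k) \<Rightarrow> 'k"
  assumes \<Phi>: "\<And>y. y \<in> S \<Longrightarrow> \<Phi> y \<in> V_dual" and \<psi>: "\<psi> \<in> V_dual"
    and conv: "\<And>f. f \<in> V \<Longrightarrow> ((\<lambda>y. \<Phi> y f) \<longlongrightarrow> \<psi> f) (at a within S)" and \<epsilon>: "\<epsilon> > 0"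
  shows "\<forall>\<^sub>F y in at a within S. qE l (u (\<Phi> y) - u \<psi>) < \<epsilon>"
proof (rule sequentially_imp_eventually_within, intro allI impI)
  fix y assume y: "(\<forall>j. y j \<in> S \<and> y j \<noteq> a) \<and> y \<longlonglongrightarrow> a"
  have "(\<lambda>j. \<Phi> (y j) f) \<longlonglongrightarrow> \<psi> f" if "f \<in> V" for f
    using conv[OF that] y unfolding tendsto_at_iff_sequentially comp_def by blast
  then show "\<forall>\<^sub>F j in sequentially. qE l (u (\<Phi> (y j)) - u \<psi>) < \<epsilon>"
    using y by (intro u_eventually_close_sequentially \<Phi> \<psi> \<epsilon>) auto
qed

end

abbreviation pd_word ::
    "('k::real_normed_field \<Rightarrow> 'e \<Rightarrow> 'e) \<Rightarrow> ('l \<Rightarrow> 'e::ab_group_add \<Rightarrow> real) \<Rightarrow> 'n::finite list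
      \<Rightarrow> (real^'n \<Rightarrow> 'e) \<Rightarrow> real^'n \<Rightarrow> 'e" where
  "pd_word sc q w \<equiv> foldr (pd sc q) w"

locale eps_prod_on_open = eps_prod_element V P scE qE u
  for V :: "((real,'n::finite) vec \<Rightarrow> 'k::real_normed_field) set" and P :: "'i \<Rightarrow> ((real,'n) vec \<Rightarrow> 'k) \<Rightarrow> real"
    and scE :: "'k \<Rightarrow> 'e::ab_group_add \<Rightarrow> 'e" and qE :: "'l \<Rightarrow> 'e \<Rightarrow> real"
    and u :: "(((real,'n) vec \<Rightarrow> 'k) \<Rightarrow> 'k) \<Rightarrow> 'e" +
  fixes \<Omega> :: "(real,'n) vec set"
  assumes open_\<Omega>: "open \<Omega>"
    and delta_dual: "\<And>x. x \<in> \<Omega> \<Longrightarrow> ext_on V (\<lambda>f. f x) \<in> V_dual"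
begin

abbreviation S_u :: "(real,'n) vec \<Rightarrow> 'e" where
  "S_u \<equiv> \<lambda>x. u (ext_on V (\<lambda>f. f x))"

text \<open>\<open>delta_pd w x\<close> is \<open>\<delta>\<^sub>x \<circ> \<partial>\<^sup>w\<close>, where \<open>\<partial>\<^sup>w\<close> differentiates along the letters
  of \<open>w\<close>, the last letter first.\<close>

abbreviation delta_pd :: "'n list \<Rightarrow> (real,'n) vec \<Rightarrow> ((real,'n) vec \<Rightarrow> 'k) \<Rightarrow> 'k" where
  "delta_pd w x \<equiv> ext_on V (\<lambda>f. pd_word (*) (\<lambda>_::unit. norm) w f x)"

definition derivative_formula :: "'n list \<Rightarrow> bool" where
  "derivative_formula w \<longleftrightarrow> (\<forall>x\<in>\<Omega>. delta_pd w x \<in> V_dual \<and> pd_word scE qE w S_u x = u (delta_pd w x))"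

lemma cont_on_pd_word_S:
  assumes cont: "\<And>f. f \<in> V \<Longrightarrow> continuous_on \<Omega> (pd_word (*) (\<lambda>_::unit. norm) w f)"
    and formula: "derivative_formula w"
  shows "cont_on_sn qE \<Omega> (pd_word scE qE w S_u)"
  unfolding cont_on_sn_def
proof (intro ballI allI impI)
  fix x l and \<epsilon> :: real assume x: "x \<in> \<Omega>" and \<epsilon>: "\<epsilon> > 0"
  have "\<forall>\<^sub>F y in at x within \<Omega>. qE l (u (delta_pd w y) - u (delta_pd w x)) < \<epsilon>"
  proof (rule u_eventually_close_within[OF _ _ _ \<epsilon>])
    show "delta_pd w y \<in> V_dual" if "y \<in> \<Omega>" for y
      using formula that by (simp add: derivative_formula_def)
    show "delta_pd w x \<in> V_dual"
      using formula x by (simp add: derivative_formula_def)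
    show "((\<lambda>y. delta_pd w y f) \<longlongrightarrow> delta_pd w x f) (at x within \<Omega>)" if "f \<in> V" for f
      using cont[OF that] x that by (simp add: ext_on_def continuous_on_def)
  qed
  then obtain d where d: "d > 0"
    "\<forall>y\<in>\<Omega>. y \<noteq> x \<and> dist y x < d \<longrightarrow> qE l (u (delta_pd w y) - u (delta_pd w x)) < \<epsilon>"
    unfolding eventually_at by blast
  have "qE l (pd_word scE qE w S_u y - pd_word scE qE w S_u x) < \<epsilon>" if "y \<in> \<Omega>" "dist y x < d" for y
    using d(2) that x formula \<epsilon> by (cases "y = x") (auto simp: derivative_formula_def qE_zero)
  with d(1) show "\<exists>\<delta>>0. \<forall>y\<in>\<Omega>. dist y x < \<delta> \<longrightarrow> qE l (pd_word scE qE w S_u y - pd_word scE qE w S_u x) < \<epsilon>"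
    by blast
qed

lemma has_pd_pd_word_S:
  assumes formula: "derivative_formula w" and x: "x \<in> \<Omega>"
    and pd_f: "\<And>f. f \<in> V \<Longrightarrow> has_pd (*) (\<lambda>_::unit. norm) n (pd_word (*) (\<lambda>_::unit. norm) w f) x
                                  (pd_word (*) (\<lambda>_::unit. norm) (n # w) f x)"
  shows "delta_pd (n # w) x \<in> V_dual \<and> has_pd scE qE n (pd_word scE qE w S_u) x (u (delta_pd (n # w) x))"
proof -
  obtain r where r: "r > 0" "ball x r \<subseteq> \<Omega>" using open_\<Omega> x open_contains_ball by blast
  define e where "e = axis n (1::real)"
  have near: "x + h *\<^sub>R e \<in> \<Omega>" if "h \<in> ball 0 r" for h
    using that r(2) by (auto simp: e_def dist_norm subset_iff)
  have formula_at: "delta_pd w y \<in> V_dual" "pd_word scE qE w S_u y = u (delta_pd w y)" if "y \<in> \<Omega>" for y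
    using formula that by (auto simp: derivative_formula_def)
  \<comment> \<open>difference quotients of point evaluations, mapped by \<open>u\<close> to those of \<open>S_u\<close>\<close>
  define \<Phi> where "\<Phi> h = fscale (of_real (inverse h)) (delta_pd w (x + h *\<^sub>R e) - delta_pd w x)" for h
  have \<Phi>_dual: "\<Phi> h \<in> V_dual" if "h \<in> ball 0 r" for h
    unfolding \<Phi>_def
    by (intro dual_sp_closed_fscale dual_sp_closed_diff formula_at(1) near that x)
  have \<Phi>_conv: "((\<lambda>h. \<Phi> h f) \<longlongrightarrow> delta_pd (n # w) x f) (at 0 within ball 0 r)" if f: "f \<in> V" for f
    using tendsto_mono[OF at_le[OF subset_UNIV] pd_f[OF f, unfolded has_pd_scalar_iff]] f
    by (simp add: \<Phi>_def e_def ext_on_def)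
  have \<psi>_dual: "delta_pd (n # w) x \<in> V_dual"
  proof (rule limit_within_in_dual[of 0 "ball 0 r" \<Phi>])
    show "0 islimpt ball (0::real) r" using r(1) by (simp add: islimpt_ball)
    show "delta_pd (n # w) x f = 0" if "f \<notin> V" for f using that by (simp add: ext_on_def)
  qed (use \<Phi>_dual \<Phi>_conv in auto)
  have "has_pd scE qE n (pd_word scE qE w S_u) x (u (delta_pd (n # w) x))"
    unfolding has_pd_def
  proof (intro allI impI)
    fix l and \<epsilon> :: real assume \<epsilon>: "\<epsilon> > 0"
    obtain d where d: "d > 0"
      "\<forall>h\<in>ball 0 r. h \<noteq> 0 \<and> dist h 0 < d \<longrightarrow> qE l (u (\<Phi> h) - u (delta_pd (n # w) x)) < \<epsilon>"
      using u_eventually_close_within[OF \<Phi>_dual \<psi>_dual \<Phi>_conv \<epsilon>] unfolding eventually_at by blast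
    have "qE l (scE (of_real (inverse h)) (pd_word scE qE w S_u (x + h *\<^sub>R axis n 1) - pd_word scE qE w S_u x)
        - u (delta_pd (n # w) x)) < \<epsilon>" if h: "h \<noteq> 0" "\<bar>h\<bar> < min d r" for h
    proof -
      have hr: "h \<in> ball 0 r" using h by simp
      have "u (\<Phi> h) = scE (of_real (inverse h)) (pd_word scE qE w S_u (x + h *\<^sub>R axis n 1) - pd_word scE qE w S_u x)"
        using formula_at near[OF hr] x by (simp add: \<Phi>_def e_def u_fscale u_diff dual_sp_closed_diff)
      moreover have "qE l (u (\<Phi> h) - u (delta_pd (n # w) x)) < \<epsilon>" using d(2) hr h by auto
      ultimately show ?thesis by simp
    qed
    with d(1) r(1) show "\<exists>\<delta>>0. \<forall>h. h \<noteq> 0 \<and> \<bar>h\<bar> < \<delta> \<longrightarrow> qE l (scE (of_real (inverse h))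
        (pd_word scE qE w S_u (x + h *\<^sub>R axis n 1) - pd_word scE qE w S_u x) - u (delta_pd (n # w) x)) < \<epsilon>"
      by (intro exI[of _ "min d r"]) auto
  qed
  with \<psi>_dual show ?thesis by blast
qed

lemma C1_sn_pd_word_S:
  assumes C1: "\<And>f. f \<in> V \<Longrightarrow> C1_sn (*) (\<lambda>_::unit. norm) \<Omega> (pd_word (*) (\<lambda>_::unit. norm) w f)"
    and formula: "derivative_formula w"
  shows "C1_sn scE qE \<Omega> (pd_word scE qE w S_u) \<and> (\<forall>n. derivative_formula (n # w))"
proof -
  have pd_f: "has_pd (*) (\<lambda>_::unit. norm) n (pd_word (*) (\<lambda>_::unit. norm) w f) x
      (pd_word (*) (\<lambda>_::unit. norm) (n # w) f x)" if f: "f \<in> V" and x: "x \<in> \<Omega>" for f n x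
  proof -
    obtain v where "has_pd (*) (\<lambda>_::unit. norm) n (pd_word (*) (\<lambda>_::unit. norm) w f) x v"
      using C1[OF f] x unfolding C1_sn_def by blast
    then show ?thesis using pd_scalar_eqI by fastforce
  qed
  have has_pd_S: "delta_pd (n # w) x \<in> V_dual \<and>
      has_pd scE qE n (pd_word scE qE w S_u) x (u (delta_pd (n # w) x))" if x: "x \<in> \<Omega>" for x n
    by (rule has_pd_pd_word_S[OF formula x pd_f[OF _ x]])
  have step: "derivative_formula (n # w)" for n
    unfolding derivative_formula_def
    using has_pd_S pd_eqI[OF has_pd_S[THEN conjunct2]] by simp
  have "cont_on_sn qE \<Omega> (pd_word scE qE (n # w) S_u)" for n
    using C1 step by (intro cont_on_pd_word_S) (auto simp: C1_sn_def cont_on_sn_scalar_iff)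
  then have "C1_sn scE qE \<Omega> (pd_word scE qE w S_u)"
    using has_pd_S unfolding C1_sn_def by fastforce
  with step show ?thesis by blast
qed

lemma Ck_sn_pd_word_S:
  assumes "\<And>f. f \<in> V \<Longrightarrow> Ck_sn (*) (\<lambda>_::unit. norm) \<Omega> m (pd_word (*) (\<lambda>_::unit. norm) w f)"
    and "derivative_formula w"
  shows "Ck_sn scE qE \<Omega> m (pd_word scE qE w S_u) \<and> (\<forall>w'. length w' \<le> m \<longrightarrow> derivative_formula (w' @ w))"
  using assms
proof (induction m arbitrary: w)
  case 0
  then show ?case using cont_on_pd_word_S by (simp add: cont_on_sn_scalar_iff)
next
  case (Suc m)
  have C1: "C1_sn scE qE \<Omega> (pd_word scE qE w S_u)" and step: "derivative_formula (n # w)" for n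
    using C1_sn_pd_word_S[OF _ Suc.prems(2)] Suc.prems(1) by simp_all
  have IH: "Ck_sn scE qE \<Omega> m (pd_word scE qE (n # w) S_u)"
    "\<forall>w'. length w' \<le> m \<longrightarrow> derivative_formula (w' @ n # w)" for n
    using Suc.IH[OF _ step] Suc.prems(1) by simp_all
  have "derivative_formula (w' @ w)" if "length w' \<le> Suc m" for w'
  proof (cases w' rule: rev_cases)
    case Nil
    then show ?thesis using Suc.prems(2) by simp
  next
    case (snoc w'' n)
    then show ?thesis using IH(2)[of n] that by simp
  qed
  then show ?case using C1 IH(1) by simp
qed

lemma Ck_enat_S:
  assumes "\<And>f. f \<in> V \<Longrightarrow> Ck_enat (*) (\<lambda>_::unit. norm) \<Omega> k f"
  shows "Ck_enat scE qE \<Omega> k S_u \<and> (\<forall>w. enat (length w) \<le> k \<longrightarrow> derivative_formula w)"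
proof -
  have "derivative_formula []" using delta_dual by (simp add: derivative_formula_def)
  then have S: "Ck_sn scE qE \<Omega> m S_u \<and> (\<forall>w. length w \<le> m \<longrightarrow> derivative_formula w)"
    if "\<And>f. f \<in> V \<Longrightarrow> Ck_sn (*) (\<lambda>_::unit. norm) \<Omega> m f" for m
    using Ck_sn_pd_word_S[of m "[]"] that by simp
  show ?thesis
  proof (cases k)
    case (enat m)
    then show ?thesis using S[of m] assms by (simp add: Ck_enat_def)
  next
    case infinity
    then show ?thesis using S assms by (fastforce simp: Ck_enat_def)
  qed
qed

end

lemma lin_on_zero:
  fixes T :: "('a \<Rightarrow> 'k::real_normed_field) \<Rightarrow> 'w \<Rightarrow> 'k"
  assumes "lin_subspace D" "lin_on fscale fscale D T"
  shows "T 0 = 0"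
proof -
  have "T (fscale 0 0) = fscale 0 (T 0)"
    using assms(2) lin_subspace_zero[OF assms(1)] unfolding lin_on_def by blast
  moreover have "fscale 0 (0 :: 'a \<Rightarrow> 'k) = 0" "fscale 0 (T 0) = 0" by (simp_all add: fun_eq_iff)
  ultimately show ?thesis by simp
qed

lemma weighted_norm_add_le:
  fixes T :: "('a \<Rightarrow> 'k::real_normed_field) \<Rightarrow> 'w \<Rightarrow> 'k"
  assumes "lin_on fscale fscale D T" "f \<in> D" "g \<in> D" "\<nu> \<ge> 0"
  shows "norm (T (f + g) x) * \<nu> \<le> norm (T f x) * \<nu> + norm (T g x) * \<nu>"
proof -
  have "norm (T (f + g) x) * \<nu> = norm (T f x + T g x) * \<nu>"
    using assms by (simp add: lin_on_def)
  also have "\<dots> \<le> (norm (T f x) + norm (T g x)) * \<nu>"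
    using assms(4) by (intro mult_right_mono norm_triangle_ineq)
  finally show ?thesis by (simp add: distrib_right)
qed

lemma weighted_norm_fscale:
  fixes T :: "('a \<Rightarrow> 'k::real_normed_field) \<Rightarrow> 'w \<Rightarrow> 'k"
  shows "lin_on fscale fscale D T \<Longrightarrow> f \<in> D \<Longrightarrow> norm (T (fscale c f) x) * \<nu> = norm c * (norm (T f x) * \<nu>)"
  by (simp add: lin_on_def norm_mult)

lemma lin_subspace_FV_set:
  fixes AP :: "((real,'n::finite) vec \<Rightarrow> 'k::real_normed_field) set"
  assumes AP: "lin_subspace AP" and D: "\<And>m. lin_subspace (D m)"
    and T: "\<And>m. lin_on fscale fscale (D m) (T m)" and \<nu>: "\<And>j m x. \<nu> j m x \<ge> 0"
  shows "lin_subspace (FV_set AP D T \<omega> \<nu>)"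
  unfolding lin_subspace_def
proof (intro conjI ballI allI)
  show "0 \<in> FV_set AP D T \<omega> \<nu>"
    using AP D lin_on_zero[OF D T] by (simp add: FV_set_def lin_subspace_zero image_constant_conv)
next
  fix f g assume f: "f \<in> FV_set AP D T \<omega> \<nu>" and g: "g \<in> FV_set AP D T \<omega> \<nu>"
  have "bdd_above ((\<lambda>x. norm (T m (f + g) x) * \<nu> j m x) ` \<omega> m)" for j m
  proof -
    have "bdd_above ((\<lambda>x. norm (T m f x) * \<nu> j m x) ` \<omega> m)"
      "bdd_above ((\<lambda>x. norm (T m g x) * \<nu> j m x) ` \<omega> m)"
      using f g by (simp_all add: FV_set_def)
    then obtain Mf Mg where M: "\<forall>x\<in>\<omega> m. norm (T m f x) * \<nu> j m x \<le> Mf"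
      "\<forall>x\<in>\<omega> m. norm (T m g x) * \<nu> j m x \<le> Mg"
      unfolding bdd_above_def by auto
    have D: "f \<in> D m" "g \<in> D m" using f g by (simp_all add: FV_set_def)
    have "norm (T m (f + g) x) * \<nu> j m x \<le> Mf + Mg" if "x \<in> \<omega> m" for x
      using weighted_norm_add_le[OF T D \<nu>[of j m x], of x] M that by fastforce
    then show ?thesis by (rule bdd_aboveI2)
  qed
  with f g AP D show "f + g \<in> FV_set AP D T \<omega> \<nu>" by (simp add: FV_set_def lin_subspace_add)
next
  fix c f assume f: "f \<in> FV_set AP D T \<omega> \<nu>"
  have "bdd_above ((\<lambda>x. norm (T m (fscale c f) x) * \<nu> j m x) ` \<omega> m)" for j m
  proof -
    have "bdd_above ((\<lambda>x. norm (T m f x) * \<nu> j m x) ` \<omega> m)" using f by (simp add: FV_set_def)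
    then obtain M where "\<forall>x\<in>\<omega> m. norm (T m f x) * \<nu> j m x \<le> M"
      unfolding bdd_above_def by auto
    moreover have "f \<in> D m" using f by (simp add: FV_set_def)
    ultimately have "norm (T m (fscale c f) x) * \<nu> j m x \<le> norm c * M" if "x \<in> \<omega> m" for x
      unfolding weighted_norm_fscale[OF T \<open>f \<in> D m\<close>] using that by (simp add: mult_left_mono)
    then show ?thesis by (rule bdd_aboveI2)
  qed
  with f AP D show "fscale c f \<in> FV_set AP D T \<omega> \<nu>" by (simp add: FV_set_def lin_subspace_fscale)
qed

lemma seminormed_fun_space_FV:
  fixes AP :: "((real,'n::finite) vec \<Rightarrow> 'k::real_normed_field) set"
    and \<nu> :: "'j \<Rightarrow> 'm \<Rightarrow> 'w \<Rightarrow> real"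
  assumes AP: "lin_subspace AP" and D: "\<And>m. lin_subspace (D m)"
    and T: "\<And>m. lin_on fscale fscale (D m) (T m)"
    and \<nu>: "\<And>j m x. \<nu> j m x \<ge> 0" and \<omega>: "\<And>m. \<omega> m \<noteq> {}"
  shows "seminormed_fun_space (FV_set AP D T \<omega> \<nu>) (FV_sn T \<omega> \<nu>)"
proof (rule seminormed_fun_space.intro[OF lin_subspace_FV_set[OF AP D T \<nu>]])
  fix i :: "'j \<times> 'm" and f assume f: "f \<in> FV_set AP D T \<omega> \<nu>"
  obtain j m where i: "i = (j, m)" by (cases i) simp
  have bdd: "bdd_above ((\<lambda>x. norm (T m f x) * \<nu> j m x) ` \<omega> m)" using f by (simp add: FV_set_def)
  obtain x0 where x0: "x0 \<in> \<omega> m" using \<omega> by blast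
  have "0 \<le> norm (T m f x0) * \<nu> j m x0" using \<nu> by simp
  then show "0 \<le> FV_sn T \<omega> \<nu> i f"
    unfolding i FV_sn_def prod.case using cSUP_upper[OF x0 bdd] by (rule order_trans)
  fix g assume g: "g \<in> FV_set AP D T \<omega> \<nu>"
  have bdd_g: "bdd_above ((\<lambda>x. norm (T m g x) * \<nu> j m x) ` \<omega> m)" using g by (simp add: FV_set_def)
  show "FV_sn T \<omega> \<nu> i (f + g) \<le> FV_sn T \<omega> \<nu> i f + FV_sn T \<omega> \<nu> i g"
    unfolding i FV_sn_def prod.case
  proof (rule cSUP_least[OF \<omega>])
    fix x assume x: "x \<in> \<omega> m"
    have "norm (T m (f + g) x) * \<nu> j m x \<le> norm (T m f x) * \<nu> j m x + norm (T m g x) * \<nu> j m x"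
      using f g by (intro weighted_norm_add_le[OF T _ _ \<nu>[of j m x]]) (simp_all add: FV_set_def)
    also have "\<dots> \<le> (SUP x\<in>\<omega> m. norm (T m f x) * \<nu> j m x) + (SUP x\<in>\<omega> m. norm (T m g x) * \<nu> j m x)"
      using cSUP_upper[OF x bdd] cSUP_upper[OF x bdd_g] by (rule add_mono)
    finally show "norm (T m (f + g) x) * \<nu> j m x
        \<le> (SUP x\<in>\<omega> m. norm (T m f x) * \<nu> j m x) + (SUP x\<in>\<omega> m. norm (T m g x) * \<nu> j m x)" .
  qed
next
  fix i :: "'j \<times> 'm" and c f assume f: "f \<in> FV_set AP D T \<omega> \<nu>"
  obtain j m where i: "i = (j, m)" by (cases i) simp
  have bdd: "bdd_above ((\<lambda>x. norm (T m f x) * \<nu> j m x) ` \<omega> m)" using f by (simp add: FV_set_def)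
  show "FV_sn T \<omega> \<nu> i (fscale c f) \<le> norm c * FV_sn T \<omega> \<nu> i f"
    unfolding i FV_sn_def prod.case
  proof (rule cSUP_least[OF \<omega>])
    fix x assume x: "x \<in> \<omega> m"
    have "norm (T m (fscale c f) x) * \<nu> j m x = norm c * (norm (T m f x) * \<nu> j m x)"
      using f by (intro weighted_norm_fscale[OF T]) (simp add: FV_set_def)
    also have "\<dots> \<le> norm c * (SUP x\<in>\<omega> m. norm (T m f x) * \<nu> j m x)"
      using cSUP_upper[OF x bdd] by (rule mult_left_mono) simp
    finally show "norm (T m (fscale c f) x) * \<nu> j m x \<le> norm c * (SUP x\<in>\<omega> m. norm (T m f x) * \<nu> j m x)" .
  qed
qed

definition multi_index_word :: "('n::{finite,linorder} \<Rightarrow> nat) \<Rightarrow> 'n list" where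
  "multi_index_word \<beta> = concat (map (\<lambda>n. replicate (\<beta> n) n) (sorted_list_of_set UNIV))"

lemma foldr_funpow_eq_foldr_concat:
  "foldr (\<lambda>n g. (F n ^^ \<beta> n) g) xs f = foldr F (concat (map (\<lambda>n. replicate (\<beta> n) n) xs)) f"
  by (induction xs) simp_all

lemma pd_multi_eq_pd_word: "pd_multi sc q \<beta> f = pd_word sc q (multi_index_word \<beta>) f"
  unfolding pd_multi_def multi_index_word_def by (rule foldr_funpow_eq_foldr_concat)

lemma length_multi_index_word: "length (multi_index_word \<beta>) = sum \<beta> UNIV"
proof -
  have "length (multi_index_word \<beta>) = sum_list (map \<beta> (sorted_list_of_set UNIV))"
    by (simp add: multi_index_word_def length_concat comp_def)
  also have "\<dots> = sum \<beta> UNIV"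
    by (simp add: sum_list_distinct_conv_sum_set)
  finally show ?thesis .
qed

theorem proposition4p12:
  fixes \<Omega> :: "(real,'n::{finite,linorder}) vec set"
    and k :: enat
    and scE :: "'k::real_normed_field \<Rightarrow> 'e::ab_group_add \<Rightarrow> 'e"
    and qE :: "'l \<Rightarrow> 'e \<Rightarrow> real"
    and AP :: "((real,'n) vec \<Rightarrow> 'k) set"
    and D :: "'m \<Rightarrow> ((real,'n) vec \<Rightarrow> 'k) set"
    and T :: "'m \<Rightarrow> ((real,'n) vec \<Rightarrow> 'k) \<Rightarrow> 'w \<Rightarrow> 'k"
    and \<omega> :: "'m \<Rightarrow> 'w set"
    and \<nu> :: "'j \<Rightarrow> 'm \<Rightarrow> 'w \<Rightarrow> real"
  defines "FV \<equiv> FV_set AP D T \<omega> \<nu>"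
    and "P \<equiv> FV_sn T \<omega> \<nu>"
  assumes open_\<Omega>: "open \<Omega>"
    and E_lc: "lc_hausdorff scE qE"
    and E_nontriv: "\<exists>e::'e. e \<noteq> 0"
    and \<omega>_ne: "\<forall>m. \<omega> m \<noteq> {}"
    and \<nu>_nonneg: "\<forall>j m x. \<nu> j m x \<ge> 0"
    and \<nu>_pos: "\<forall>m. \<forall>x\<in>\<omega> m. \<exists>j. \<nu> j m x > 0"
    and AP_sub: "lin_subspace AP"
    and AP_ext: "\<forall>f\<in>AP. \<forall>x. x \<notin> \<Omega> \<longrightarrow> f x = 0"
    and D_sub: "\<forall>m. lin_subspace (D m)"
    and D_ext: "\<forall>m. \<forall>f\<in>D m. \<forall>x. x \<notin> \<Omega> \<longrightarrow> f x = 0"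
    and T_lin: "\<forall>m. lin_on fscale fscale (D m) (T m)"
    and dom_hausdorff: "\<forall>f\<in>FV. (\<forall>i. P i f = 0) \<longrightarrow> f = 0"
    and dom_directed: "directed_sn FV P"
    and dom_delta: "\<forall>x\<in>\<Omega>. ext_on FV (\<lambda>f. f x) \<in> dual_sp fscale FV P"
    and incl_welldef: "\<forall>f\<in>FV. Ck_enat (*) (\<lambda>_::unit. norm) \<Omega> k f"
    and incl_cont: "\<forall>K \<beta>. compact K \<and> K \<subseteq> \<Omega> \<and> enat (sum \<beta> UNIV) \<le> k \<longrightarrow>
        (\<exists>I C. finite I \<and> (\<forall>f\<in>FV. \<forall>x\<in>K.
           norm (pd_multi (*) (\<lambda>_::unit. norm) \<beta> f x) \<le> C * (\<Sum>i\<in>I. P i f)))"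
    and barrelled: "barrelled fscale FV P"
  shows "\<forall>u\<in>eps_prod fscale FV P scE qE.
     Ck_enat scE qE \<Omega> k (\<lambda>x. u (ext_on FV (\<lambda>f. f x))) \<and>
     (\<forall>\<beta>. enat (sum \<beta> UNIV) \<le> k \<longrightarrow> (\<forall>x\<in>\<Omega>.
        pd_multi scE qE \<beta> (\<lambda>y. u (ext_on FV (\<lambda>f. f y))) x
          = u (ext_on FV (\<lambda>f. pd_multi (*) (\<lambda>_::unit. norm) \<beta> f x))))"
proof
  fix u assume u: "u \<in> eps_prod fscale FV P scE qE"
  have "seminormed_fun_space FV P"
    unfolding FV_def P_def using AP_sub D_sub T_lin \<nu>_nonneg \<omega>_ne by (intro seminormed_fun_space_FV) auto
  then interpret eps_prod_on_open FV P scE qE u \<Omega>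
    using barrelled E_lc u open_\<Omega> dom_delta
    by (simp add: eps_prod_on_open_def eps_prod_on_open_axioms_def eps_prod_element_def
        eps_prod_element_axioms_def barrelled_fun_space_def barrelled_fun_space_axioms_def lc_space_def)
  have "Ck_enat scE qE \<Omega> k S_u \<and> (\<forall>w. enat (length w) \<le> k \<longrightarrow> derivative_formula w)"
    using incl_welldef by (intro Ck_enat_S) auto
  then show "Ck_enat scE qE \<Omega> k S_u \<and> (\<forall>\<beta>. enat (sum \<beta> UNIV) \<le> k \<longrightarrow> (\<forall>x\<in>\<Omega>.
      pd_multi scE qE \<beta> S_u x = u (ext_on FV (\<lambda>f. pd_multi (*) (\<lambda>_::unit. norm) \<beta> f x))))"
    by (auto simp: derivative_formula_def pd_multi_eq_pd_word length_multi_index_word[symmetric])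
qed

end
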